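(* Let $G$ be a complete geometric graph and let $B$ be a blocker for $\mathcal{T}_{\leq 3}(G)$. Let $a$ be a leaf of $B$ with leaf edge $[a,b]$, let $l(a,b)^{+}$ be one of the two open sides of the line $l(a,b)$, and suppose $V(G)\cap l(a,b)^{+}\neq\emptyset$. Let $c\in V(G)\cap l(a,b)^{+}$ be the vertex for which the angle $\angle abc$ is maximal among all vertices in $l(a,b)^{+}$. Then $[b,c]\in E(B)$.
   Context: A geometric graph is a graph whose vertices are points in the plane in general position (no three collinear) and whose edges are straight segments between pairs of vertices; $G$ is complete if all pairs of vertices are joined. $l(a,b)$ is the line through $a$ and $b$. $\mathcal{T}_{\leq k}(G)$ denotes the family of all simple (non-crossing) spanning trees of $G$ of (graph) diameter at most $k$. A subgraph $B$ blocks a family $\mathcal{F}$ of subgraphs if it shares at least one edge with every member of $\mathcal{F}$; a blocker of $\mathcal{F}$ is a subgraph that blocks $\mathcal{F}$ and has the smallest possible number of edges among all subgraphs blocking $\mathcal{F}$. A leaf of $B$ is a vertex of degree 1 in $B$, and its leaf edge is the unique edge of $B$ containing it. *)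

theory Defs
  imports "HOL-Analysis.Analysis"
begin

type_synonym point = "real \<times> real"
type_synonym edge = "point set"

definition general_position :: "point set \<Rightarrow> bool" where
  "general_position V \<longleftrightarrow> finite V \<and>
     (\<forall>a\<in>V. \<forall>b\<in>V. \<forall>c\<in>V. a \<noteq> b \<and> a \<noteq> c \<and> b \<noteq> c \<longrightarrow> \<not> collinear {a, b, c})"

definition complete_edges :: "point set \<Rightarrow> edge set" where
  "complete_edges V = {{a, b} | a b. a \<in> V \<and> b \<in> V \<and> a \<noteq> b}"

definition seg :: "edge \<Rightarrow> point set" where
  "seg e = (\<Union>a\<in>e. \<Union>b\<in>e. closed_segment a b)"

definition non_crossing :: "edge set \<Rightarrow> bool" where
  "non_crossing T \<longleftrightarrow> (\<forall>e\<in>T. \<forall>f\<in>T. e \<noteq> f \<longrightarrow> seg e \<inter> seg f \<subseteq> e \<inter> f)"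

definition walk_le :: "edge set \<Rightarrow> nat \<Rightarrow> point \<Rightarrow> point \<Rightarrow> bool" where
  "walk_le T k u v \<longleftrightarrow> (\<exists>ps. ps \<noteq> [] \<and> hd ps = u \<and> last ps = v \<and> length ps \<le> Suc k \<and>
      (\<forall>i. Suc i < length ps \<longrightarrow> {ps ! i, ps ! Suc i} \<in> T))"

definition connected_on :: "point set \<Rightarrow> edge set \<Rightarrow> bool" where
  "connected_on V T \<longleftrightarrow> (\<forall>u\<in>V. \<forall>v\<in>V. \<exists>k. walk_le T k u v)"

definition has_cycle :: "edge set \<Rightarrow> bool" where
  "has_cycle T \<longleftrightarrow> (\<exists>vs. length vs \<ge> 3 \<and> distinct vs \<and>
      (\<forall>i < length vs. {vs ! i, vs ! ((Suc i) mod length vs)} \<in> T))"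

definition spanning_tree :: "point set \<Rightarrow> edge set \<Rightarrow> edge set \<Rightarrow> bool" where
  "spanning_tree V E T \<longleftrightarrow> T \<subseteq> E \<and> connected_on V T \<and> \<not> has_cycle T"

definition diam_le :: "point set \<Rightarrow> edge set \<Rightarrow> nat \<Rightarrow> bool" where
  "diam_le V T k \<longleftrightarrow> (\<forall>u\<in>V. \<forall>v\<in>V. walk_le T k u v)"

definition trees_le :: "point set \<Rightarrow> nat \<Rightarrow> edge set set" where
  "trees_le V k = {T. spanning_tree V (complete_edges V) T \<and> non_crossing T \<and> diam_le V T k}"

definition blocks :: "edge set \<Rightarrow> edge set set \<Rightarrow> bool" where
  "blocks B F \<longleftrightarrow> (\<forall>T\<in>F. B \<inter> T \<noteq> {})"

definition is_blocker :: "edge set \<Rightarrow> edge set set \<Rightarrow> edge set \<Rightarrow> bool" where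
  "is_blocker E F B \<longleftrightarrow> B \<subseteq> E \<and> blocks B F \<and>
     (\<forall>B'. B' \<subseteq> E \<and> blocks B' F \<longrightarrow> card B \<le> card B')"

definition leaf :: "edge set \<Rightarrow> point \<Rightarrow> bool" where
  "leaf B a \<longleftrightarrow> card {e\<in>B. a \<in> e} = 1"

text \<open>Open side of line l(a,b); s = 1 or s = -1 selects one of the two sides.\<close>
definition open_side :: "point \<Rightarrow> point \<Rightarrow> real \<Rightarrow> point set" where
  "open_side a b s = {p. s * ((fst b - fst a) * (snd p - snd a) - (snd b - snd a) * (fst p - fst a)) > 0}"

definition angle3 :: "point \<Rightarrow> point \<Rightarrow> point \<Rightarrow> real" where
  "angle3 a b c = arccos (((a - b) \<bullet> (c - b)) / (norm (a - b) * norm (c - b)))"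

end

theory Submission
  imports Defs
begin

text \<open>If \<open>[b,c]\<close> were not in \<open>B\<close>, the star centred at \<open>a\<close> on \<open>V - {b}\<close> together with the
  pendant edge \<open>[b,c]\<close> would be a spanning tree of diameter at most 3 sharing no edge with \<open>B\<close>,
  since \<open>[a,b]\<close> is the only edge of \<open>B\<close> at \<open>a\<close>. This tree is simple: segments from \<open>a\<close> meet
  only at \<open>a\<close>; a segment \<open>[a,x]\<close> with \<open>x\<close> on the far side of \<open>l(a,b)\<close> is separated from
  \<open>[b,c]\<close> by that line; and for \<open>x\<close> on the side of \<open>c\<close> the maximality of \<open>\<angle>abc\<close> puts
  \<open>x\<close> on the same side of \<open>l(b,c)\<close> as \<open>a\<close>.\<close>

definition cross2 :: "point \<Rightarrow> point \<Rightarrow> real" where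
  "cross2 u v = fst u * snd v - snd u * fst v"

definition orient :: "point \<Rightarrow> point \<Rightarrow> point \<Rightarrow> real" where
  "orient p q r = cross2 (q - p) (r - p)"

lemma open_side_orient: "open_side a b s = {p. s * orient a b p > 0}"
  by (simp add: open_side_def orient_def cross2_def)

lemma cross2_eq_0_imp_parallel:
  assumes "u \<noteq> 0" "cross2 u w = 0"
  shows "w = ((u \<bullet> w) / (u \<bullet> u)) *\<^sub>R u"
proof -
  obtain u1 u2 where u: "u = (u1, u2)" by force
  obtain w1 w2 where w: "w = (w1, w2)" by force
  have "u1\<^sup>2 + u2\<^sup>2 \<noteq> 0" using assms(1) by (auto simp: u zero_prod_def add_nonneg_eq_0_iff)
  moreover have "u1 * w2 = u2 * w1" using assms(2) by (simp add: u w cross2_def)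
  ultimately show ?thesis
    by (simp add: u w inner_Pair field_simps power2_eq_square)
qed

lemma orient_eq_0_imp_collinear:
  assumes "p \<noteq> q" "orient p q r = 0"
  shows "collinear {p, q, r}"
proof -
  have "r - p = ((q - p) \<bullet> (r - p) / ((q - p) \<bullet> (q - p))) *\<^sub>R (q - p)"
    using assms by (intro cross2_eq_0_imp_parallel) (auto simp: orient_def)
  then have "collinear {0, q - p, r - p}" unfolding collinear_lemma by blast
  then have "collinear {q, p, r}" by (simp add: collinear_3[of q p r])
  then show ?thesis by (simp add: insert_commute)
qed

lemma general_position_orient_nonzero:
  assumes "general_position V" "p \<in> V" "q \<in> V" "r \<in> V" "p \<noteq> q" "p \<noteq> r" "q \<noteq> r"
  shows "orient p q r \<noteq> 0"
  using assms orient_eq_0_imp_collinear unfolding general_position_def by blast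

lemma orient_convex_combination:
  "orient p q ((1 - t) *\<^sub>R u + t *\<^sub>R v) = (1 - t) * orient p q u + t * orient p q v"
  by (simp add: orient_def cross2_def algebra_simps)

lemma orient_closed_segment:
  assumes "z \<in> closed_segment u v"
  obtains t where "0 \<le> t" "t \<le> 1" "z = (1 - t) *\<^sub>R u + t *\<^sub>R v"
    "orient p q z = (1 - t) * orient p q u + t * orient p q v"
  using assms by (auto simp: closed_segment_def orient_convex_combination)

lemma orient_on_closed_segment: "z \<in> closed_segment p q \<Longrightarrow> orient p q z = 0"
  by (erule orient_closed_segment[where p = p and q = q]) (simp add: orient_def cross2_def)

lemma orient_self [simp]: "orient p q p = 0" "orient p q q = 0"
  by (simp_all add: orient_def cross2_def)

lemma closed_segments_common_endpoint:
  assumes "orient p q r \<noteq> 0"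
  shows "closed_segment p q \<inter> closed_segment p r \<subseteq> {p}"
proof
  fix z assume z: "z \<in> closed_segment p q \<inter> closed_segment p r"
  then have "z \<in> closed_segment p r" by blast
  then obtain t where t: "0 \<le> t" "t \<le> 1" "z = (1 - t) *\<^sub>R p + t *\<^sub>R r"
    "orient p q z = (1 - t) * orient p q p + t * orient p q r"
    by (rule orient_closed_segment)
  have "orient p q z = 0" using z orient_on_closed_segment by blast
  then have "t = 0" using t(4) assms by simp
  then show "z \<in> {p}" using t(3) by simp
qed

lemma convex_combination_same_sign_nonzero:
  fixes x y t :: real
  assumes "x * y > 0" "0 \<le> t" "t \<le> 1"
  shows "(1 - t) * x + t * y \<noteq> 0"
proof -
  have "((1 - t) * x + t * y) * x = (1 - t) * x\<^sup>2 + t * (x * y)"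
    by (simp add: algebra_simps power2_eq_square)
  moreover have "(1 - t) * x\<^sup>2 + t * (x * y) > 0"
    using assms by (cases "t = 0") (auto intro: add_nonneg_pos add_nonneg_nonneg)
  ultimately show ?thesis by auto
qed

lemma closed_segment_disjoint_same_side:
  assumes "orient p q u * orient p q v > 0"
  shows "closed_segment u v \<inter> closed_segment p q = {}"
proof (rule ccontr)
  assume "closed_segment u v \<inter> closed_segment p q \<noteq> {}"
  then obtain z where z: "z \<in> closed_segment u v" "z \<in> closed_segment p q" by blast
  obtain t where "0 \<le> t" "t \<le> 1" "z = (1 - t) *\<^sub>R u + t *\<^sub>R v"
    "orient p q z = (1 - t) * orient p q u + t * orient p q v"
    using z(1) by (rule orient_closed_segment)
  moreover have "orient p q z = 0" using z(2) by (rule orient_on_closed_segment)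
  ultimately show False using convex_combination_same_sign_nonzero[OF assms] by metis
qed

lemma closed_segment_disjoint_opposite_sides:
  assumes "orient a b x * orient a b c < 0" "a \<noteq> b"
  shows "closed_segment a x \<inter> closed_segment b c = {}"
proof (rule ccontr)
  assume "closed_segment a x \<inter> closed_segment b c \<noteq> {}"
  then obtain z where z: "z \<in> closed_segment a x" "z \<in> closed_segment b c" by blast
  obtain t where t: "0 \<le> t" "t \<le> 1" "z = (1 - t) *\<^sub>R a + t *\<^sub>R x"
    "orient a b z = (1 - t) * orient a b a + t * orient a b x"
    using z(1) by (rule orient_closed_segment)
  obtain t' where t': "0 \<le> t'" "t' \<le> 1" "z = (1 - t') *\<^sub>R b + t' *\<^sub>R c"
    "orient a b z = (1 - t') * orient a b b + t' * orient a b c"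
    using z(2) by (rule orient_closed_segment)
  have "t * (orient a b x * orient a b c) = t' * (orient a b c)\<^sup>2"
    using t(4) t'(4) by (simp add: power2_eq_square)
  moreover have "t * (orient a b x * orient a b c) \<le> 0" "t' * (orient a b c)\<^sup>2 \<ge> 0"
    using t(1) t'(1) assms(1) by (auto simp: mult_nonneg_nonpos)
  ultimately have "t * (orient a b x * orient a b c) = 0" "t' * (orient a b c)\<^sup>2 = 0" by linarith+
  then have "t = 0" "t' = 0" using assms(1) by auto
  then show False using t(3) t'(3) assms(2) by simp
qed

definition vangle :: "point \<Rightarrow> point \<Rightarrow> real" where
  "vangle u v = arccos ((u \<bullet> v) / (norm u * norm v))"

lemma angle3_eq_vangle: "angle3 a b c = vangle (a - b) (c - b)"
  by (simp add: angle3_def vangle_def)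

lemma cross2_inner_Lagrange: "(cross2 u v)\<^sup>2 + (u \<bullet> v)\<^sup>2 = (norm u * norm v)\<^sup>2"
  by (cases u, cases v) (simp add: cross2_def inner_Pair norm_Pair power_mult_distrib power2_eq_square algebra_simps)

lemma cross2_eq_inner_identity:
  "(norm u)\<^sup>2 * cross2 p q = cross2 u q * (u \<bullet> p) - cross2 u p * (u \<bullet> q)"
  by (cases u, cases p, cases q) (simp add: cross2_def inner_Pair norm_Pair power2_eq_square algebra_simps)

lemma abs_inner_div_norms_le_1: "\<bar>(u \<bullet> v) / (norm u * norm v)\<bar> \<le> 1"
  using Cauchy_Schwarz_ineq2[of u v] by (cases "norm u * norm v = 0") (simp_all add: abs_mult)

lemma vangle_bounds: "0 \<le> vangle u v" "vangle u v \<le> pi"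
  using abs_inner_div_norms_le_1[of u v, unfolded abs_le_iff]
  unfolding vangle_def by (auto intro: arccos_lbound arccos_ubound)

lemma cos_vangle: "cos (vangle u v) = (u \<bullet> v) / (norm u * norm v)"
  unfolding vangle_def by (rule cos_arccos_abs[OF abs_inner_div_norms_le_1])

lemma sin_vangle:
  assumes "u \<noteq> 0" "v \<noteq> 0"
  shows "sin (vangle u v) = \<bar>cross2 u v\<bar> / (norm u * norm v)"
proof -
  have nn: "norm u * norm v > 0" using assms by simp
  have "((u \<bullet> v) / (norm u * norm v))\<^sup>2 + (cross2 u v / (norm u * norm v))\<^sup>2
      = ((cross2 u v)\<^sup>2 + (u \<bullet> v)\<^sup>2) / (norm u * norm v)\<^sup>2"
    by (simp add: power_divide add_divide_distrib)
  also have "\<dots> = 1" using cross2_inner_Lagrange[of u v] assms by simp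
  finally have "1 - ((u \<bullet> v) / (norm u * norm v))\<^sup>2 = (cross2 u v / (norm u * norm v))\<^sup>2"
    by linarith
  then have "sin (vangle u v) = sqrt ((cross2 u v / (norm u * norm v))\<^sup>2)"
    unfolding vangle_def by (simp add: sin_arccos_abs[OF abs_inner_div_norms_le_1])
  then show ?thesis using nn by (simp add: real_sqrt_abs abs_divide)
qed

text \<open>With \<open>\<alpha>\<close>, \<open>\<beta>\<close> the angles of \<open>p\<close>, \<open>q\<close> seen from \<open>u\<close>, the Lagrange-type identity
  turns \<open>|u|\<^sup>2 \<cdot> cross2 p q \<cdot> cross2 u q\<close> into a positive multiple of \<open>sin \<beta> \<cdot> sin (\<beta> - \<alpha>)\<close>.\<close>

lemma vangle_le_imp_cross2_nonneg:
  assumes same_side: "cross2 u p * cross2 u q > 0" and le: "vangle u p \<le> vangle u q"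
  shows "cross2 p q * cross2 u q \<ge> 0"
proof -
  have nonzero: "u \<noteq> 0" "p \<noteq> 0" "q \<noteq> 0"
    using same_side by (auto simp: cross2_def)
  define \<alpha> where "\<alpha> = vangle u p"
  define \<beta> where "\<beta> = vangle u q"
  have cross_p: "\<bar>cross2 u p\<bar> = norm u * norm p * sin \<alpha>"
    and cross_q: "\<bar>cross2 u q\<bar> = norm u * norm q * sin \<beta>"
    using sin_vangle nonzero by (simp_all add: \<alpha>_def \<beta>_def)
  have inner_p: "u \<bullet> p = norm u * norm p * cos \<alpha>"
    and inner_q: "u \<bullet> q = norm u * norm q * cos \<beta>"
    using cos_vangle nonzero by (simp_all add: \<alpha>_def \<beta>_def)
  have "(norm u)\<^sup>2 * (cross2 p q * cross2 u q)
      = (cross2 u q * (u \<bullet> p) - cross2 u p * (u \<bullet> q)) * cross2 u q"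
    by (simp only: mult.assoc[symmetric] cross2_eq_inner_identity)
  also have "\<dots> = \<bar>cross2 u q\<bar>\<^sup>2 * (u \<bullet> p) - \<bar>cross2 u p\<bar> * \<bar>cross2 u q\<bar> * (u \<bullet> q)"
    using same_side by (simp add: abs_mult[symmetric] power2_eq_square algebra_simps)
  also have "\<dots> = norm u ^ 3 * norm p * (norm q)\<^sup>2 * sin \<beta> * (sin \<beta> * cos \<alpha> - cos \<beta> * sin \<alpha>)"
    unfolding cross_p cross_q inner_p inner_q by (simp add: power2_eq_square power3_eq_cube algebra_simps)
  also have "\<dots> = norm u ^ 3 * norm p * (norm q)\<^sup>2 * sin \<beta> * sin (\<beta> - \<alpha>)"
    by (simp add: sin_diff)
  also have "\<dots> \<ge> 0"
    using vangle_bounds[of u p] vangle_bounds[of u q] le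
    by (intro mult_nonneg_nonneg sin_ge_zero) (simp_all add: \<alpha>_def \<beta>_def)
  finally show ?thesis using nonzero by (simp add: zero_le_mult_iff)
qed

lemma angle3_le_imp_same_side:
  assumes "orient a b x * orient a b c > 0" "angle3 a b x \<le> angle3 a b c"
  shows "orient b c x * orient b c a \<ge> 0"
proof -
  have "orient a b x = - cross2 (a - b) (x - b)" "orient a b c = - cross2 (a - b) (c - b)"
    "orient b c x = - cross2 (x - b) (c - b)" "orient b c a = - cross2 (a - b) (c - b)"
    by (simp_all add: orient_def cross2_def algebra_simps)
  then show ?thesis
    using vangle_le_imp_cross2_nonneg[of "a - b" "x - b" "c - b"] assms
    by (simp add: angle3_eq_vangle)
qed

lemma walk_le_refl: "walk_le T k u u"
  unfolding walk_le_def by (intro exI[of _ "[u]"]) auto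

lemma walk_le_mono: "walk_le T k u v \<Longrightarrow> k \<le> k' \<Longrightarrow> walk_le T k' u v"
  unfolding walk_le_def by (auto intro: order_trans)

lemma walk_le_Cons:
  assumes "{u, w} \<in> T" "walk_le T k w v"
  shows "walk_le T (Suc k) u v"
proof -
  obtain ps where ps: "ps \<noteq> []" "hd ps = w" "last ps = v" "length ps \<le> Suc k"
    "\<And>i. Suc i < length ps \<Longrightarrow> {ps ! i, ps ! Suc i} \<in> T"
    using assms(2) unfolding walk_le_def by blast
  have "{(u # ps) ! i, (u # ps) ! Suc i} \<in> T" if "Suc i < length (u # ps)" for i
    using that assms(1) ps by (cases i) (auto simp: hd_conv_nth)
  then show ?thesis
    unfolding walk_le_def using ps by (intro exI[of _ "u # ps"]) auto
qed

lemma diam_le_imp_connected_on: "diam_le V T k \<Longrightarrow> connected_on V T"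
  unfolding diam_le_def connected_on_def by blast

lemma not_has_cycle_if_few_branch_vertices:
  assumes branch: "\<And>p q r. {p, q} \<in> T \<Longrightarrow> {q, r} \<in> T \<Longrightarrow> p \<noteq> r \<Longrightarrow> q \<in> W"
    and "finite W" "card W \<le> 2"
  shows "\<not> has_cycle T"
proof
  assume "has_cycle T"
  then obtain vs where len: "length vs \<ge> 3" and dist: "distinct vs"
    and edge: "\<And>i. i < length vs \<Longrightarrow> {vs ! i, vs ! (Suc i mod length vs)} \<in> T"
    unfolding has_cycle_def by blast
  define n where "n = length vs"
  have n: "n \<ge> 3" "vs \<noteq> []" using len by (auto simp: n_def)
  have neq: "vs ! i \<noteq> vs ! j" if "i < n" "j < n" "i \<noteq> j" for i j
    using dist that by (simp add: n_def nth_eq_iff_index_eq)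
  have e0: "{vs ! 0, vs ! 1} \<in> T" using edge[of 0] n by (simp add: n_def)
  have e1: "{vs ! 1, vs ! 2} \<in> T" using edge[of 1] n by (simp add: n_def numeral_eq_Suc)
  have e2: "{vs ! 2, vs ! (3 mod n)} \<in> T" using edge[of 2] n by (simp add: n_def numeral_eq_Suc)
  have e3: "{vs ! (n - 1), vs ! 0} \<in> T" using edge[of "n - 1"] n by (simp add: n_def)
  have "3 mod n \<noteq> 1"
    using n by (cases "n = 3") simp_all
  then have "vs ! 0 \<in> W" "vs ! 1 \<in> W" "vs ! 2 \<in> W"
    using branch[OF e3 e0] branch[OF e0 e1] branch[OF e1 e2] neq[of "n - 1" 1] neq[of 0 2]
      neq[of 1 "3 mod n"] n by simp_all
  moreover have "card {vs ! 0, vs ! 1, vs ! 2} = 3"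
    using neq[of 0 1] neq[of 0 2] neq[of 1 2] n by simp
  ultimately have "3 \<le> card W"
    using card_mono[OF \<open>finite W\<close>, of "{vs ! 0, vs ! 1, vs ! 2}"] by simp
  then show False using \<open>card W \<le> 2\<close> by simp
qed

lemma doubleton_in_complete_edges_iff:
  "{p, q} \<in> complete_edges V \<longleftrightarrow> p \<in> V \<and> q \<in> V \<and> p \<noteq> q"
proof
  assume "{p, q} \<in> complete_edges V"
  then show "p \<in> V \<and> q \<in> V \<and> p \<noteq> q"
    unfolding complete_edges_def by (auto simp: doubleton_eq_iff)
qed (unfold complete_edges_def, blast)

lemma seg_doubleton: "seg {p, q} = closed_segment p q"
  unfolding seg_def by (auto simp: closed_segment_commute)

lemma leaf_edge_unique:
  assumes "leaf B a" "e \<in> B" "f \<in> B" "a \<in> e" "a \<in> f"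
  shows "e = f"
proof -
  obtain g where "{e \<in> B. a \<in> e} = {g}"
    using assms(1) unfolding leaf_def by (rule card_1_singletonE)
  then have "e \<in> {g}" "f \<in> {g}" using assms(2-5) by (metis (no_types, lifting) mem_Collect_eq)+
  then show ?thesis by simp
qed

definition star_pendant :: "point set \<Rightarrow> point \<Rightarrow> point \<Rightarrow> point \<Rightarrow> edge set" where
  "star_pendant V a b c = {{a, x} | x. x \<in> V \<and> x \<noteq> a \<and> x \<noteq> b} \<union> {{b, c}}"

lemma star_pendant_cases:
  assumes "e \<in> star_pendant V a b c"
  obtains x where "e = {a, x}" "x \<in> V" "x \<noteq> a" "x \<noteq> b" | "e = {b, c}"
  using assms unfolding star_pendant_def by blast

lemma star_pendant_edge: "x \<in> V \<Longrightarrow> x \<noteq> a \<Longrightarrow> x \<noteq> b \<Longrightarrow> {a, x} \<in> star_pendant V a b c"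
  and star_pendant_pendant_edge: "{b, c} \<in> star_pendant V a b c"
  unfolding star_pendant_def by blast+

lemma star_pendant_subset_complete_edges:
  assumes "a \<in> V" "b \<in> V" "c \<in> V" "b \<noteq> c"
  shows "star_pendant V a b c \<subseteq> complete_edges V"
proof
  fix e assume "e \<in> star_pendant V a b c"
  then show "e \<in> complete_edges V"
    using assms by (cases rule: star_pendant_cases) (auto simp: doubleton_in_complete_edges_iff)
qed

lemma diam_le_star_pendant:
  assumes "a \<in> V" "c \<in> V" "c \<noteq> a" "c \<noteq> b"
  shows "diam_le V (star_pendant V a b c) 3"
  unfolding diam_le_def
proof (intro ballI)
  fix u v assume u: "u \<in> V" and v: "v \<in> V"
  let ?T = "star_pendant V a b c"
  have ac: "{a, c} \<in> ?T" and ca: "{c, a} \<in> ?T" and bc: "{b, c} \<in> ?T" and cb: "{c, b} \<in> ?T"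
    using star_pendant_edge[OF assms(2-4)] star_pendant_pendant_edge by (auto simp: insert_commute)
  have from_a: "walk_le ?T 1 a x" if "x \<in> V" "x \<noteq> b" for x
    using that walk_le_refl walk_le_Cons[OF star_pendant_edge walk_le_refl] by (cases "x = a") auto
  have "walk_le ?T 2 a b"
    using walk_le_Cons[OF ac walk_le_Cons[OF cb walk_le_refl]] by (simp add: numeral_eq_Suc)
  then have from_a': "walk_le ?T 2 a x" if "x \<in> V" for x
    using from_a[OF that] walk_le_mono by (cases "x = b") auto
  consider "u = a" | "u = b" "u \<noteq> a" | "u \<noteq> a" "u \<noteq> b" by blast
  then show "walk_le ?T 3 u v"
  proof cases
    case 1
    then show ?thesis using from_a'[OF v] walk_le_mono by auto
  next
    case 2
    have "walk_le ?T 3 b v" if "v \<noteq> b"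
      using walk_le_Cons[OF bc walk_le_Cons[OF ca from_a[OF v that]]] by (simp add: numeral_eq_Suc)
    then show ?thesis using 2 walk_le_refl by (cases "v = b") auto
  next
    case 3
    have "{u, a} \<in> ?T" using star_pendant_edge[OF u 3] by (simp add: insert_commute)
    then show ?thesis using walk_le_Cons[OF _ from_a'[OF v]] by (simp add: numeral_eq_Suc)
  qed
qed

lemma not_has_cycle_star_pendant: "\<not> has_cycle (star_pendant V a b c)"
proof (rule not_has_cycle_if_few_branch_vertices[where W = "{a, c}"])
  fix p q r
  assume pq: "{p, q} \<in> star_pendant V a b c" and qr: "{q, r} \<in> star_pendant V a b c" and "p \<noteq> r"
  show "q \<in> {a, c}"
  proof (rule ccontr)
    assume q: "q \<notin> {a, c}"
    have unique: "y = (if q = b then c else a)" if "{y, q} \<in> star_pendant V a b c" for y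
      using that q by (cases rule: star_pendant_cases) (auto simp: doubleton_eq_iff)
    have "{r, q} \<in> star_pendant V a b c" using qr by (simp add: insert_commute)
    then show False using unique[OF pq] unique[of r] \<open>p \<noteq> r\<close> by simp
  qed
qed (auto simp: card_insert_if)

lemma non_crossing_star_pendant:
  assumes gp: "general_position V" and V: "a \<in> V" "b \<in> V" "c \<in> V" "a \<noteq> b" "a \<noteq> c" "b \<noteq> c"
    and disjoint: "\<And>x. x \<in> V \<Longrightarrow> x \<notin> {a, b, c} \<Longrightarrow> closed_segment a x \<inter> closed_segment b c = {}"
  shows "non_crossing (star_pendant V a b c)"
proof -
  have star: "closed_segment a x \<inter> closed_segment a y \<subseteq> {a}"
    if "x \<in> V" "y \<in> V" "x \<noteq> a" "y \<noteq> a" "x \<noteq> y" for x y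
    using that V by (intro closed_segments_common_endpoint general_position_orient_nonzero[OF gp]) auto
  have pendant: "closed_segment a x \<inter> closed_segment b c \<subseteq> {a, x} \<inter> {b, c}"
    if "x \<in> V" "x \<noteq> a" "x \<noteq> b" for x
  proof (cases "x = c")
    case True
    have "closed_segment c a \<inter> closed_segment c b \<subseteq> {c}"
      using V by (intro closed_segments_common_endpoint general_position_orient_nonzero[OF gp]) auto
    then show ?thesis using True by (auto simp: closed_segment_commute)
  qed (use that disjoint in auto)
  show ?thesis
    unfolding non_crossing_def
  proof (intro ballI impI)
    fix e f
    assume e: "e \<in> star_pendant V a b c" and f: "f \<in> star_pendant V a b c" and "e \<noteq> f"
    from e show "seg e \<inter> seg f \<subseteq> e \<inter> f"
    proof (cases rule: star_pendant_cases)
      case (1 x)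
      from f show ?thesis
      proof (cases rule: star_pendant_cases)
        case (1 y)
        then show ?thesis using \<open>e = {a, x}\<close> \<open>x \<in> V\<close> \<open>x \<noteq> a\<close> \<open>e \<noteq> f\<close> star[of x y]
          by (auto simp: seg_doubleton)
      next
        case 2
        then show ?thesis using 1 pendant[of x] by (simp add: seg_doubleton)
      qed
    next
      case 2
      from f show ?thesis
      proof (cases rule: star_pendant_cases)
        case (1 y)
        then show ?thesis using 2 pendant[of y] by (auto simp: seg_doubleton)
      qed (use 2 \<open>e \<noteq> f\<close> in simp)
    qed
  qed
qed

lemma star_pendant_in_trees_le:
  assumes "general_position V" "a \<in> V" "b \<in> V" "c \<in> V" "a \<noteq> b" "a \<noteq> c" "b \<noteq> c"
    and "\<And>x. x \<in> V \<Longrightarrow> x \<notin> {a, b, c} \<Longrightarrow> closed_segment a x \<inter> closed_segment b c = {}"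
  shows "star_pendant V a b c \<in> trees_le V 3"
proof -
  have diam: "diam_le V (star_pendant V a b c) 3"
    using assms(2,4,6,7) by (intro diam_le_star_pendant) auto
  show ?thesis
    unfolding trees_le_def spanning_tree_def mem_Collect_eq
    using star_pendant_subset_complete_edges[OF assms(2-4,7)] diam_le_imp_connected_on[OF diam]
      not_has_cycle_star_pendant non_crossing_star_pendant[OF assms] diam by simp
qed

lemma star_pendant_disjoint_blocker:
  assumes "leaf B a" "{a, b} \<in> B" "{b, c} \<notin> B"
  shows "B \<inter> star_pendant V a b c = {}"
proof -
  have "{a, x} \<notin> B" if "x \<noteq> b" for x
    using leaf_edge_unique[OF assms(1) _ assms(2), of "{a, x}"] that by (auto simp: doubleton_eq_iff)
  then show ?thesis using assms(3) by (auto simp: star_pendant_def)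
qed

lemma max_angle_segments_disjoint:
  assumes gp: "general_position V" and V: "a \<in> V" "b \<in> V" "a \<noteq> b"
    and c: "c \<in> V \<inter> open_side a b s"
    and max: "\<forall>c'\<in>V \<inter> open_side a b s. angle3 a b c' \<le> angle3 a b c"
    and x: "x \<in> V" "x \<notin> {a, b, c}"
  shows "closed_segment a x \<inter> closed_segment b c = {}"
proof -
  have cV: "c \<in> V" and cs: "s * orient a b c > 0"
    using c by (auto simp: open_side_orient)
  have "c \<noteq> a" "c \<noteq> b" using cs by auto
  have "s \<noteq> 0" "orient a b x \<noteq> 0"
    using cs general_position_orient_nonzero[OF gp V(1,2) x(1)] V x by auto
  then consider "s * orient a b x > 0" | "s * orient a b x < 0"
    by (metis linorder_neqE_linordered_idom mult_eq_0_iff)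
  then show ?thesis
  proof cases
    case 1
    have "orient a b x * orient a b c > 0"
      using 1 cs by (auto simp: zero_less_mult_iff)
    moreover have "angle3 a b x \<le> angle3 a b c" using 1 max x(1) by (auto simp: open_side_orient)
    ultimately have "orient b c x * orient b c a \<ge> 0" by (rule angle3_le_imp_same_side)
    moreover have "orient b c x \<noteq> 0" "orient b c a \<noteq> 0"
      using general_position_orient_nonzero[OF gp V(2) cV x(1)]
        general_position_orient_nonzero[OF gp V(2) cV V(1)] V(3) x(2) \<open>c \<noteq> a\<close> \<open>c \<noteq> b\<close> by auto
    ultimately have "orient b c x * orient b c a > 0" by (simp add: order_le_neq_trans)
    then show ?thesis
      using closed_segment_disjoint_same_side[of b c x a] by (simp add: closed_segment_commute)
  next
    case 2
    then have "orient a b x * orient a b c < 0"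
      using cs by (auto simp: zero_less_mult_iff mult_less_0_iff)
    then show ?thesis using closed_segment_disjoint_opposite_sides V(3) by blast
  qed
qed

theorem mainTheorem9:
  fixes V :: "point set" and B :: "edge set" and a b c :: point and s :: real
  assumes "general_position V"
    and "is_blocker (complete_edges V) (trees_le V 3) B"
    and "leaf B a" and "{a, b} \<in> B"
    and "s = 1 \<or> s = -1"
    and "V \<inter> open_side a b s \<noteq> {}"
    and "c \<in> V \<inter> open_side a b s"
    and "\<forall>c'\<in>V \<inter> open_side a b s. angle3 a b c' \<le> angle3 a b c"
  shows "{b, c} \<in> B"
proof (rule ccontr)
  assume bc: "{b, c} \<notin> B"
  have B: "B \<subseteq> complete_edges V" "blocks B (trees_le V 3)"
    using assms(2) by (auto simp: is_blocker_def)
  have "a \<in> V \<and> b \<in> V \<and> a \<noteq> b"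
    using B(1) assms(4) doubleton_in_complete_edges_iff by blast
  then have V: "a \<in> V" "b \<in> V" "a \<noteq> b" by auto
  have c: "c \<in> V" "a \<noteq> c" "b \<noteq> c"
    using assms(7) by (auto simp: open_side_orient)
  let ?T = "star_pendant V a b c"
  have "?T \<in> trees_le V 3"
    using star_pendant_in_trees_le[OF assms(1) V(1,2) c(1) V(3) c(2,3)]
      max_angle_segments_disjoint[OF assms(1) V assms(7,8)] by blast
  moreover have "B \<inter> ?T = {}"
    using assms(3,4) bc by (rule star_pendant_disjoint_blocker)
  ultimately show False using B(2) unfolding blocks_def by blast
qed

end
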